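(* Let $1\le r\le n$, $A\in\mathrm{SGL}_n(\mathbb{F}_2)$, and let $\mathbf{x}_1,\ldots,\mathbf{x}_r\in\mathbb{F}_2^n$ be linearly independent with $\mathbf{x}_i^{\top}A^{-1}\mathbf{x}_j=1$ for all $i,j$. If $\sum_{i=1}^r\mathbf{x}_i\mathbf{x}_i^{\top}=\sum_{i=1}^r\mathbf{y}_i\mathbf{y}_i^{\top}$ for some $\mathbf{y}_1,\ldots,\mathbf{y}_r\in\mathbb{F}_2^n$, then $\mathbf{y}_i^{\top}A^{-1}\mathbf{y}_j=1$ for all $i,j$.
   Context: $\mathrm{SGL}_n(\mathbb{F}_2)$ is the set of invertible symmetric $n\times n$ matrices over the binary field $\mathbb{F}_2$. *)

theory Defs
  imports "HOL-Analysis.Analysis" "HOL-Library.Z2"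
begin

(* F_2 is the type bit from HOL-Library.Z2; F_2^n is bit ^ 'n, n = CARD('n). *)

definition bform :: "bit ^ 'n \<Rightarrow> bit ^ 'n ^ 'n \<Rightarrow> bit ^ 'n \<Rightarrow> bit" where
  "bform x M y = (\<Sum>k\<in>UNIV. x $ k * (M *v y) $ k)"

definition outer :: "bit ^ 'n \<Rightarrow> bit ^ 'n \<Rightarrow> bit ^ 'n ^ 'n" where
  "outer x y = (\<chi> i j. x $ i * y $ j)"

end

theory Submission imports Defs begin

text \<open>Let \<open>M = \<Sum>\<^sub>i x\<^sub>i x\<^sub>i\<^sup>T = \<Sum>\<^sub>i y\<^sub>i y\<^sub>i\<^sup>T\<close> and \<open>M u = \<Sum>\<^sub>i (x\<^sub>i\<^sup>T u) x\<^sub>i\<close>.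
  Applying \<open>M\<close> to a dual vector of the independent \<open>x\<^sub>i\<close> yields \<open>x\<^sub>l = M u \<in> span {y\<^sub>i}\<close>,
  so the \<open>r\<close> vectors \<open>y\<^sub>i\<close> span an \<open>r\<close>-dimensional space and are independent as well.
  Over \<open>\<bbbF>\<^sub>2\<close> the diagonal of \<open>M\<close> is \<open>\<Sum>\<^sub>i x\<^sub>i = \<Sum>\<^sub>i y\<^sub>i\<close>. For a dual vector \<open>w\<close> of the \<open>y\<^sub>i\<close>
  we get \<open>y\<^sub>l = M w = \<Sum>\<^sub>i (x\<^sub>i\<^sup>T w) x\<^sub>i\<close> with coefficient sum \<open>(\<Sum>\<^sub>i y\<^sub>i)\<^sup>T w = 1\<close>: every \<open>y\<^sub>l\<close>
  is an affine combination of the \<open>x\<^sub>i\<close>, and a bilinear form that is constantly \<open>1\<close> on the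
  \<open>x\<^sub>i\<close> is constantly \<open>1\<close> on their affine combinations.\<close>

lemma scalar_product_sum_left:
  "scalar_product (sum f A) w = (\<Sum>i\<in>A. scalar_product (f i) w)"
  unfolding scalar_product_def sum_component sum_distrib_right by (rule sum.swap)

lemma scalar_product_sum_right:
  "scalar_product w (sum f A) = (\<Sum>i\<in>A. scalar_product w (f i))"
  unfolding scalar_product_def sum_component sum_distrib_left by (rule sum.swap)

lemma scalar_product_scale_left:
  "scalar_product (c *s v) w = c * scalar_product v w"
  unfolding scalar_product_def by (simp only: vector_smult_component sum_distrib_left mult.assoc)

lemma scalar_product_scale_right:
  fixes v w :: "'a::comm_semiring_1 ^ 'n"
  shows "scalar_product w (c *s v) = c * scalar_product w v"
  unfolding scalar_product_def by (simp only: vector_smult_component sum_distrib_left mult.left_commute)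

lemma scalar_product_dual_vector:
  fixes x :: "'i \<Rightarrow> 'a::field ^ 'n"
  assumes "inj_on x I" "vec.independent (x ` I)" "l \<in> I"
  obtains u where "\<forall>i\<in>I. scalar_product (x i) u = (if i = l then 1 else 0)"
proof -
  obtain g where g: "Vector_Spaces.linear (*s) (*s) g"
    "\<forall>w\<in>x ` I. g w = ((\<chi> k. if w = x l then 1 else 0) :: 'a ^ 'n)"
    using vec.linear_independent_extend[OF assms(2),
        where f = "\<lambda>w. (\<chi> k. if w = x l then 1 else 0) :: 'a ^ 'n"] by blast
  fix a :: 'n
  have "scalar_product w (matrix g $ a) = g w $ a" for w
  proof -
    have "g w $ a = (matrix g *v w) $ a" using matrix_works[OF g(1)] by simp
    then show ?thesis
      by (simp add: matrix_vector_mult_def scalar_product_def mult.commute)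
  qed
  then show ?thesis
    using that[of "matrix g $ a"] g(2) assms(1,3) by (auto simp: inj_on_eq_iff)
qed

lemma sum_scale_dual_vector:
  fixes x :: "'i \<Rightarrow> 'a::semiring_1 ^ 'n"
  assumes "finite I" "l \<in> I" "\<forall>i\<in>I. scalar_product (x i) u = (if i = l then 1 else 0)"
  shows "(\<Sum>i\<in>I. scalar_product (x i) u *s x i) = x l"
proof -
  have "(\<Sum>i\<in>I. scalar_product (x i) u *s x i) = (\<Sum>i\<in>I. if i = l then x l else 0)"
    using assms(3) by (intro sum.cong) auto
  then show ?thesis using assms(1,2) by simp
qed

lemma bform_eq_scalar_product: "bform x M y = scalar_product x (M *v y)"
  unfolding bform_def scalar_product_def ..

lemma bform_sum_scale:
  "bform (\<Sum>i\<in>I. c i *s x i) M (\<Sum>j\<in>J. d j *s y j)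
     = (\<Sum>i\<in>I. \<Sum>j\<in>J. c i * d j * bform (x i) M (y j))"
  unfolding bform_eq_scalar_product vec.sum vec.scale scalar_product_sum_left
    scalar_product_sum_right scalar_product_scale_left scalar_product_scale_right sum_distrib_left
  by (subst sum.swap) (simp only: mult.assoc mult.left_commute)

lemma bform_affine_combinations:
  assumes "\<forall>i\<in>I. \<forall>j\<in>J. bform (x i) M (y j) = 1" "sum c I = 1" "sum d J = 1"
  shows "bform (\<Sum>i\<in>I. c i *s x i) M (\<Sum>j\<in>J. d j *s y j) = 1"
proof -
  have "bform (\<Sum>i\<in>I. c i *s x i) M (\<Sum>j\<in>J. d j *s y j) = (\<Sum>i\<in>I. \<Sum>j\<in>J. c i * d j)"
    unfolding bform_sum_scale using assms(1) by (intro sum.cong) auto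
  also have "\<dots> = sum c I * sum d J" by (simp only: sum_product)
  finally show ?thesis unfolding assms(2,3) by (simp only: mult_1)
qed

lemma outer_mult_vec: "outer x y *v u = scalar_product y u *s x"
  unfolding vec_eq_iff outer_def matrix_vector_mult_def scalar_product_def
    vector_smult_component vec_lambda_beta
proof
  fix i
  show "(\<Sum>j\<in>UNIV. x $ i * y $ j * u $ j) = (\<Sum>j\<in>UNIV. y $ j * u $ j) * x $ i"
    unfolding sum_distrib_right by (simp only: mult_ac)
qed

lemma sum_outer_mult_vec:
  "(\<Sum>i\<in>I. outer (x i) (x i)) *v u = (\<Sum>i\<in>I. scalar_product (x i) u *s x i)"
  by (induction I rule: infinite_finite_induct)
    (auto simp: matrix_vector_mult_add_rdistrib outer_mult_vec)

lemma sum_outer_diagonal: "(\<Sum>i\<in>I. outer (x i) (x i)) $ k $ k = sum x I $ k"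
proof -
  have "b * b = b" for b :: bit by (cases b) auto
  then show ?thesis unfolding sum_component outer_def vec_lambda_beta by simp
qed

lemma sum_eq_of_sum_outer_eq:
  assumes "(\<Sum>i\<in>I. outer (x i) (x i)) = (\<Sum>i\<in>I. outer (y i) (y i))"
  shows "sum x I = sum y I"
  using sum_outer_diagonal[of x I] sum_outer_diagonal[of y I] assms by (simp add: vec_eq_iff)

lemma span_subset_of_sum_outer_eq:
  assumes "finite I" "inj_on x I" "vec.independent (x ` I)"
    and "(\<Sum>i\<in>I. outer (x i) (x i)) = (\<Sum>i\<in>I. outer (y i) (y i))"
  shows "x ` I \<subseteq> vec.span (y ` I)"
proof clarify
  fix l assume "l \<in> I"
  then obtain u where u: "\<forall>i\<in>I. scalar_product (x i) u = (if i = l then 1 else 0)"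
    using scalar_product_dual_vector assms(2,3) by metis
  have "x l = (\<Sum>i\<in>I. outer (x i) (x i)) *v u"
    unfolding sum_outer_mult_vec using sum_scale_dual_vector[OF assms(1) \<open>l \<in> I\<close> u] ..
  also have "\<dots> = (\<Sum>i\<in>I. scalar_product (y i) u *s y i)"
    unfolding assms(4) sum_outer_mult_vec ..
  also have "\<dots> \<in> vec.span (y ` I)"
    by (intro vec.span_sum vec.span_scale vec.span_base) auto
  finally show "x l \<in> vec.span (y ` I)" .
qed

lemma independent_of_sum_outer_eq:
  assumes "finite I" "inj_on x I" "vec.independent (x ` I)"
    and "(\<Sum>i\<in>I. outer (x i) (x i)) = (\<Sum>i\<in>I. outer (y i) (y i))"
  shows "inj_on y I" "vec.independent (y ` I)"
proof -
  have "card I = vec.dim (x ` I)"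
    using vec.dim_eq_card_independent[OF assms(3)] card_image[OF assms(2)] by simp
  also have "\<dots> \<le> vec.dim (y ` I)"
    using vec.dim_subset[OF span_subset_of_sum_outer_eq[OF assms]] by simp
  finally have dim_ge: "card I \<le> vec.dim (y ` I)" .
  also have "\<dots> \<le> card (y ` I)"
    using vec.dim_le_card[OF vec.span_superset] assms(1) by blast
  finally have card_eq: "card (y ` I) = card I"
    using card_image_le[OF assms(1), of y] by simp
  then show "inj_on y I"
    using inj_on_iff_eq_card[OF assms(1)] by blast
  show "vec.independent (y ` I)"
    using card_eq dim_ge assms(1)
    by (intro vec.card_le_dim_spanning[of "y ` I" "y ` I"]) (auto intro: vec.span_base)
qed

lemma affine_combination_of_sum_outer_eq:
  assumes "finite I" "inj_on y I" "vec.independent (y ` I)" "l \<in> I"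
    and "(\<Sum>i\<in>I. outer (x i) (x i)) = (\<Sum>i\<in>I. outer (y i) (y i))"
  obtains c where "y l = (\<Sum>i\<in>I. c i *s x i)" "sum c I = 1"
proof -
  obtain w where w: "\<forall>i\<in>I. scalar_product (y i) w = (if i = l then 1 else 0)"
    using scalar_product_dual_vector assms(2-4) by metis
  have "y l = (\<Sum>i\<in>I. outer (y i) (y i)) *v w"
    unfolding sum_outer_mult_vec using sum_scale_dual_vector[OF assms(1,4) w] ..
  also have "\<dots> = (\<Sum>i\<in>I. scalar_product (x i) w *s x i)"
    unfolding assms(5)[symmetric] sum_outer_mult_vec ..
  finally have "y l = (\<Sum>i\<in>I. scalar_product (x i) w *s x i)" .
  moreover have "(\<Sum>i\<in>I. scalar_product (x i) w) = 1"
  proof -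
    have "(\<Sum>i\<in>I. scalar_product (x i) w) = (\<Sum>i\<in>I. scalar_product (y i) w)"
      unfolding scalar_product_sum_left[symmetric] sum_eq_of_sum_outer_eq[OF assms(5)] ..
    also have "\<dots> = 1" using w assms(1,4) by simp
    finally show ?thesis .
  qed
  ultimately show ?thesis by (rule that)
qed

theorem lemma4p8:
  fixes A :: "bit ^ 'n ^ 'n" and r :: nat
    and x y :: "nat \<Rightarrow> bit ^ 'n"
  assumes "1 \<le> r" and "r \<le> CARD('n)"
    and "transpose A = A" and "invertible A"
    and "inj_on x {..<r}" and "vec.independent (x ` {..<r})"
    and "\<forall>i<r. \<forall>j<r. bform (x i) (matrix_inv A) (x j) = 1"
    and "(\<Sum>i<r. outer (x i) (x i)) = (\<Sum>i<r. outer (y i) (y i))"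
  shows "\<forall>i<r. \<forall>j<r. bform (y i) (matrix_inv A) (y j) = 1"
proof (intro allI impI)
  fix j k assume "j < r" "k < r"
  note y_independent = independent_of_sum_outer_eq[OF finite_lessThan assms(5,6,8)]
  obtain c where "y j = (\<Sum>i<r. c i *s x i)" "sum c {..<r} = 1"
    using affine_combination_of_sum_outer_eq[OF finite_lessThan y_independent _ assms(8)] \<open>j < r\<close>
    by blast
  moreover obtain d where "y k = (\<Sum>i<r. d i *s x i)" "sum d {..<r} = 1"
    using affine_combination_of_sum_outer_eq[OF finite_lessThan y_independent _ assms(8)] \<open>k < r\<close>
    by blast
  ultimately show "bform (y j) (matrix_inv A) (y k) = 1"
    using bform_affine_combinations[of "{..<r}" "{..<r}" x "matrix_inv A" x c d] assms(7)
    by simp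
qed

end
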